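(* $\mathrm{Sort}(\mathrm{SC}_{1\underline{32}})$ is not a permutation class.
   Context: $\mathfrak S_n$ is the set of permutations of $\{1,\dots,n\}$. A permutation $\pi$ contains a (classical) permutation $\tau$ if some subsequence of $\pi$ has the same relative order as $\tau$. A permutation class is a set $\Pi$ of permutations such that every permutation contained in some $\pi\in\Pi$ is also in $\Pi$. A vincular pattern is a permutation with some entries underlined; a sequence contains it if it has a subsequence with the same relative order in which entries corresponding to adjacent underlined entries occupy consecutive positions. An occurrence of $1\underline{32}$ is $a_i a_j a_{j+1}$ with $i<j$ and $a_i<a_{j+1}<a_j$. For a pattern $\sigma$, the map $\mathrm{SC}_\sigma$ acts on $\tau$: read entries left to right; when the next entry $x$ is read, if pushing $x$ yields a stack whose entries read top to bottom (stack adjacency = consecutive positions) avoid $\sigma$, push $x$; otherwise pop the top stack entry to the output and repeat. At the end pop all remaining entries; the output is $\mathrm{SC}_\sigma(\tau)$. West's stack-sorting map is $s=\mathrm{SC}_{21}$. $\mathrm{Sort}_n(\mathrm{SC}_\sigma)=\{\tau\in\mathfrak S_n : s(\mathrm{SC}_\sigma(\tau))=12\cdots n\}$ and $\mathrm{Sort}(\mathrm{SC}_\sigma)=\bigcup_{n\ge1}\mathrm{Sort}_n(\mathrm{SC}_\sigma)$. *)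

theory Defs
  imports Main
begin

text \<open>A vincular pattern: a permutation (as a list) together with the set U of
 0-based positions i such that entries i and i+1 are underlined together
 (must occupy consecutive positions).\<close>
type_synonym vpattern = "nat list \<times> nat set"

definition vcontains :: "vpattern \<Rightarrow> nat list \<Rightarrow> bool" where
  "vcontains \<sigma> a \<longleftrightarrow>
     (\<exists>js. length js = length (fst \<sigma>) \<and> sorted_wrt (<) js \<and>
        (\<forall>i\<in>set js. i < length a) \<and>
        (\<forall>i<length (fst \<sigma>). \<forall>j<length (fst \<sigma>).
            (a ! (js ! i) < a ! (js ! j)) \<longleftrightarrow> (fst \<sigma> ! i < fst \<sigma> ! j)) \<and>
        (\<forall>i\<in>snd \<sigma>. Suc i < length (fst \<sigma>) \<longrightarrow> js ! Suc i = Suc (js ! i)))"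

definition pat_132u :: vpattern where "pat_132u = ([1,3,2], {1})"
definition pat_21 :: vpattern where "pat_21 = ([2,1], {})"

text \<open>Stack as a list whose head is the top; the stack read top to bottom is the list itself.
 When the stack is empty, the entry is always pushed (for patterns of length \<ge> 2 this
 agrees with the rule, since a one-entry stack avoids them).\<close>
function sc_aux :: "vpattern \<Rightarrow> nat list \<Rightarrow> nat list \<Rightarrow> nat list" where
  "sc_aux \<sigma> [] st = st"
| "sc_aux \<sigma> (x # xs) st =
     (if st = [] \<or> \<not> vcontains \<sigma> (x # st) then sc_aux \<sigma> xs (x # st)
      else hd st # sc_aux \<sigma> (x # xs) (tl st))"
  by pat_completeness auto
termination
  by (relation "measure (\<lambda>(_, xs, st). 2 * length xs + length st)") (auto simp: length_tl)

definition SC :: "vpattern \<Rightarrow> nat list \<Rightarrow> nat list" where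
  "SC \<sigma> \<tau> = sc_aux \<sigma> \<tau> []"

definition stack_sort :: "nat list \<Rightarrow> nat list" where
  "stack_sort = SC pat_21"

definition is_perm :: "nat list \<Rightarrow> bool" where
  "is_perm xs \<longleftrightarrow> distinct xs \<and> set xs = {1..length xs}"

definition perm_contains :: "nat list \<Rightarrow> nat list \<Rightarrow> bool" where
  "perm_contains \<pi> \<tau> \<longleftrightarrow> vcontains (\<tau>, {}) \<pi>"

definition perm_class :: "nat list set \<Rightarrow> bool" where
  "perm_class \<Pi> \<longleftrightarrow> (\<forall>\<pi>\<in>\<Pi>. is_perm \<pi>) \<and>
     (\<forall>\<pi>\<in>\<Pi>. \<forall>\<tau>. is_perm \<tau> \<and> length \<tau> \<ge> 1 \<and> perm_contains \<pi> \<tau> \<longrightarrow> \<tau> \<in> \<Pi>)"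

definition Sort_SC :: "vpattern \<Rightarrow> nat list set" where
  "Sort_SC \<sigma> = {\<tau>. is_perm \<tau> \<and> length \<tau> \<ge> 1 \<and>
      stack_sort (SC \<sigma> \<tau>) = [1..<length \<tau> + 1]}"

end

theory Submission
  imports Defs
begin

text \<open>The pattern-avoiding stack for 1 underline(32) sends 2413 to 4312, which West's
  stack sorts, so 2413 is sortable. But it sends the pattern 132 of 2413 to 231, the
  permutation West's stack cannot sort.\<close>

lemma vcontains_132u_iff:
  "vcontains pat_132u a \<longleftrightarrow>
     (\<exists>j<length a. \<exists>i<j. Suc j < length a \<and> a ! i < a ! Suc j \<and> a ! Suc j < a ! j)"
proof
  assume "vcontains pat_132u a"
  then obtain js where len: "length js = length [1,3,2::nat]" and inc: "sorted_wrt (<) js"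
    and bound: "\<forall>i\<in>set js. i < length a"
    and order: "\<forall>i<length [1,3,2::nat]. \<forall>j<length [1,3,2::nat].
                  (a ! (js ! i) < a ! (js ! j)) \<longleftrightarrow> ([1,3,2::nat] ! i < [1,3,2] ! j)"
    and adj: "\<forall>i\<in>{1}. Suc i < length [1,3,2::nat] \<longrightarrow> js ! Suc i = Suc (js ! i)"
    unfolding vcontains_def pat_132u_def fst_conv snd_conv by blast
  obtain x y z where js: "js = [x, y, z]"
    using len by (auto simp: length_Suc_conv)
  have "a ! x < a ! z" "a ! z < a ! y"
    using order[rule_format, of 0 2] order[rule_format, of 2 1] by (simp_all add: js)
  with inc bound adj[unfolded js] show "\<exists>j<length a. \<exists>i<j. Suc j < length a \<and> a ! i < a ! Suc j \<and> a ! Suc j < a ! j"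
    unfolding js by (intro exI[of _ y]) auto
next
  assume "\<exists>j<length a. \<exists>i<j. Suc j < length a \<and> a ! i < a ! Suc j \<and> a ! Suc j < a ! j"
  then obtain i j where "i < j" "Suc j < length a" "a ! i < a ! Suc j" "a ! Suc j < a ! j"
    by blast
  then show "vcontains pat_132u a"
    unfolding vcontains_def pat_132u_def
    by (intro exI[of _ "[i, j, Suc j]"]) (auto simp: less_Suc_eq numeral_3_eq_3)
qed

lemma vcontains_21_iff_not_sorted: "vcontains pat_21 a \<longleftrightarrow> \<not> sorted a"
proof
  assume "vcontains pat_21 a"
  then obtain js where len: "length js = length [2,1::nat]" and inc: "sorted_wrt (<) js"
    and bound: "\<forall>i\<in>set js. i < length a"
    and order: "\<forall>i<length [2,1::nat]. \<forall>j<length [2,1::nat].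
                  (a ! (js ! i) < a ! (js ! j)) \<longleftrightarrow> ([2,1::nat] ! i < [2,1] ! j)"
    unfolding vcontains_def pat_21_def fst_conv snd_conv by blast
  obtain x y where js: "js = [x, y]"
    using len by (auto simp: length_Suc_conv)
  have "a ! y < a ! x"
    using order[rule_format, of 1 0] by (simp add: js)
  with inc bound show "\<not> sorted a"
    unfolding js by (auto simp: sorted_iff_nth_mono_less not_le)
next
  assume "\<not> sorted a"
  then obtain i j where "i < j" "j < length a" "a ! j < a ! i"
    unfolding sorted_iff_nth_mono_less by (auto simp: not_le)
  then show "vcontains pat_21 a"
    unfolding vcontains_def pat_21_def
    by (intro exI[of _ "[i, j]"]) (auto simp: less_Suc_eq numeral_2_eq_2)
qed

lemma not_perm_class_if_pattern_escapes:
  assumes "\<pi> \<in> \<Pi>" "perm_contains \<pi> \<tau>" "is_perm \<tau>" "length \<tau> \<ge> 1" "\<tau> \<notin> \<Pi>"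
  shows "\<not> perm_class \<Pi>"
  using assms unfolding perm_class_def by blast

lemma SC_132u_2413: "SC pat_132u [2,4,1,3] = [4,3,1,2]"
  unfolding SC_def by (simp add: vcontains_132u_iff Ex_less_Suc2 numeral_eq_Suc)

lemma stack_sort_4312: "stack_sort [4,3,1,2] = [1,2,3,4]"
  unfolding stack_sort_def SC_def by (simp add: vcontains_21_iff_not_sorted)

lemma SC_132u_132: "SC pat_132u [1,3,2] = [2,3,1]"
  unfolding SC_def by (simp add: vcontains_132u_iff Ex_less_Suc2 numeral_eq_Suc)

lemma stack_sort_231: "stack_sort [2,3,1] = [2,1,3]"
  unfolding stack_sort_def SC_def by (simp add: vcontains_21_iff_not_sorted)

theorem mainTheorem18:
  shows "\<not> perm_class (Sort_SC pat_132u)"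
proof (rule not_perm_class_if_pattern_escapes)
  show "[2,4,1,3] \<in> Sort_SC pat_132u"
    unfolding Sort_SC_def mem_Collect_eq SC_132u_2413 stack_sort_4312
    by (auto simp: is_perm_def upt_rec)
  show "perm_contains [2,4,1,3] [1,3,2]"
    unfolding perm_contains_def vcontains_def
    by (intro exI[of _ "[0,1,3]"]) (auto simp: less_Suc_eq numeral_3_eq_3)
  show "is_perm [1,3,2]"
    by (auto simp: is_perm_def)
  show "[1,3,2] \<notin> Sort_SC pat_132u"
    unfolding Sort_SC_def mem_Collect_eq SC_132u_132 stack_sort_231
    by (simp add: upt_rec)
qed simp

end
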